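(* Let $\overrightarrow{w}=(w_1,w_2,w_3)\in(0,\infty)^3$ satisfy $w_1+w_2+w_3\ge 2\max\{w_1,w_2,w_3\}$. Then there exists a $3$-dimensional $\overrightarrow{w}$-CM copula, i.e. a random vector $(U_1,U_2,U_3)$ with each $U_i$ uniform on $[0,1]$ such that $P\left(w_1U_1+w_2U_2+w_3U_3=\frac{w_1+w_2+w_3}{2}\right)=1$.
   Context: A $d$-dimensional copula $C$ is $\overrightarrow{w}$-CM if a random vector $\overrightarrow{U}=(U_1,\dots,U_d)$ with distribution function $C$ satisfies $P\left(\sum_{i=1}^d w_iU_i=\frac12\sum_{i=1}^d w_i\right)=1$. *)

theory Defs
  imports "HOL-Probability.Probability"
begin

text \<open>A Borel probability measure on the cube space R^3 (the law of a random vector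
  (U1,U2,U3)) whose three one-dimensional marginals are uniform on [0,1]; the
  distribution function of such a law is exactly a 3-dimensional copula.\<close>
definition copula_law3 :: "(real \<times> real \<times> real) measure \<Rightarrow> bool" where
  "copula_law3 M \<longleftrightarrow> prob_space M \<and> sets M = sets borel \<and>
     distr M lborel (\<lambda>(u1,u2,u3). u1) = uniform_measure lborel {0..1} \<and>
     distr M lborel (\<lambda>(u1,u2,u3). u2) = uniform_measure lborel {0..1} \<and>
     distr M lborel (\<lambda>(u1,u2,u3). u3) = uniform_measure lborel {0..1}"

definition wCM3 :: "real \<times> real \<times> real \<Rightarrow> (real \<times> real \<times> real) measure \<Rightarrow> bool" where
  "wCM3 w M \<longleftrightarrow> copula_law3 M \<and>
     (case w of (w1,w2,w3) \<Rightarrow>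
        prob_space.prob M {(u1,u2,u3). w1*u1 + w2*u2 + w3*u3 = (w1+w2+w3)/2} = 1)"

end

theory Submission
  imports Defs
begin

text \<open>Write the weights as \<open>w = s (A + B, A + C, B + C)\<close> with \<open>A, B, C \<ge> 0\<close> (possible exactly
  under the triangle condition) and, by scaling, \<open>A B + B C + C A = 1\<close>. For \<open>t\<close> uniform on the
  circle \<open>[0,1)\<close>, each coordinate of the curve \<open>t \<mapsto> (U\<^sub>1, U\<^sub>2, U\<^sub>3)\<close> is a rotated tent map: it
  rises linearly from 0 to 1 and falls back linearly once around the circle, so it is again
  uniform. With rotations and peaks at \<open>C A\<close> and \<open>C A + A B\<close> the curve runs around a triangle
  in the plane \<open>(A + B) U\<^sub>1 + (A + C) U\<^sub>2 + (B + C) U\<^sub>3 = A + B + C\<close>.\<close>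

abbreviation uniform_01 :: "real measure" where
  "uniform_01 \<equiv> uniform_measure lborel {0..1}"

definition tent :: "real \<Rightarrow> real \<Rightarrow> real" where
  "tent r t = (if t \<le> r then t / r else (1 - t) / (1 - r))"

definition circle_shift :: "real \<Rightarrow> real \<Rightarrow> real" where
  "circle_shift c t = (if c \<le> t then t - c else t + 1 - c)"

lemma borel_measurable_tent [measurable]: "tent r \<in> borel_measurable borel"
  unfolding tent_def by measurable

lemma borel_measurable_circle_shift [measurable]: "circle_shift c \<in> borel_measurable borel"
  unfolding circle_shift_def by measurable

lemma real_distribution_uniform_01: "real_distribution uniform_01"
  unfolding real_distribution_def real_distribution_axioms_def
  by (auto intro: prob_space_uniform_measure)

lemma measure_uniform_01: "B \<in> sets borel \<Longrightarrow> measure uniform_01 B = measure lborel ({0..1} \<inter> B)"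
  by (subst measure_uniform_measure) auto

lemma distr_uniform_01_eqI:
  assumes f [measurable]: "f \<in> borel_measurable borel"
    and range: "\<And>t. t \<in> {0..1} \<Longrightarrow> f t \<in> {0..1}"
    and cdf: "\<And>x. 0 \<le> x \<Longrightarrow> x < 1 \<Longrightarrow> measure lborel ({0..1} \<inter> f -` {..x}) = x"
  shows "distr uniform_01 lborel f = uniform_01"
proof (rule cdf_unique)
  show "real_distribution (distr uniform_01 lborel f)"
    using real_distribution_uniform_01
    by (auto simp: real_distribution_def real_distribution_axioms_def intro: prob_space.prob_space_distr)
  have "measure lborel ({0..1} \<inter> f -` {..x}) = measure lborel ({0..1} \<inter> {..x})" for x
  proof -
    consider "x < 0" | "0 \<le> x" "x < 1" | "1 \<le> x" by linarith
    then show ?thesis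
    proof cases
      case 1
      then have "{0..1} \<inter> f -` {..x} = {}" "{0..1} \<inter> {..x} = {}" using range by force+
      then show ?thesis by simp
    next
      case 2
      then have "{0..1} \<inter> {..x} = {0..x}" by auto
      then show ?thesis using 2 cdf by simp
    next
      case 3
      then have "{0..1} \<inter> f -` {..x} = {0..1}" "{0..1} \<inter> {..x} = {0..1}" using range by force+
      then show ?thesis by simp
    qed
  qed
  moreover have "f -` {..x} \<in> sets borel" for x
    using measurable_sets[OF f, of "{..x}"] by simp
  ultimately show "cdf (distr uniform_01 lborel f) = cdf uniform_01"
    by (auto simp: cdf_def measure_distr measure_uniform_01)
qed (rule real_distribution_uniform_01)

lemma measure_lborel_eq_mod_finite:
  fixes S T :: "'a::euclidean_space set"
  assumes "finite F" "S - F = T - F" "S \<in> sets lborel" "T \<in> sets lborel"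
  shows "measure lborel S = measure lborel T"
proof (rule measure_eq_AE)
  have "AE x in lborel. x \<notin> F"
    using assms(1) by (auto intro: AE_discrete_difference countable_finite)
  then show "AE x in lborel. x \<in> S \<longleftrightarrow> x \<in> T"
    by eventually_elim (use assms(2) in blast)
qed (use assms in auto)

lemma measure_lborel_Icc_Un_Ioc:
  fixes a b c d :: real
  assumes "a \<le> b" "b \<le> c" "c \<le> d"
  shows "measure lborel ({a..b} \<union> {c<..d}) = (b - a) + (d - c)"
  using assms by (subst measure_Union) auto

lemma tent_range: "0 \<le> r \<Longrightarrow> r \<le> 1 \<Longrightarrow> t \<in> {0..1} \<Longrightarrow> tent r t \<in> {0..1}"
  unfolding tent_def by (auto simp: divide_le_eq)

lemma tent_le_iff:
  assumes "0 \<le> r" "r \<le> 1" "0 \<le> t" "t < 1" "0 \<le> x" "x < 1"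
  shows "tent r t \<le> x \<longleftrightarrow> t \<le> r * x \<or> 1 - (1 - r) * x \<le> t"
proof (cases "t \<le> r")
  case True
  have "\<not> 1 - (1 - r) * x \<le> t"
  proof
    assume "1 - (1 - r) * x \<le> t"
    then have "(1 - r) * (1 - x) \<le> 0" using True by (simp add: algebra_simps)
    then have "r = 1" using assms by (simp add: mult_le_0_iff)
    then show False using \<open>1 - (1 - r) * x \<le> t\<close> assms by simp
  qed
  then show ?thesis
    using True assms by (cases "r = 0") (auto simp: tent_def divide_le_eq mult.commute)
next
  case False
  moreover have "r * x \<le> r" using assms by (simp add: mult_left_le)
  ultimately show ?thesis
    using assms by (auto simp: tent_def divide_le_eq mult.commute)
qed

lemma distr_tent:
  assumes "0 \<le> r" "r \<le> 1"
  shows "distr uniform_01 lborel (tent r) = uniform_01"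
proof (rule distr_uniform_01_eqI)
  fix x :: real assume x: "0 \<le> x" "x < 1"
  define c where "c = 1 - (1 - r) * x"
  have "0 \<le> r * x" "r * x \<le> c" "c \<le> 1"
    using assms x by (simp_all add: c_def algebra_simps mult_left_le_one_le)
  then have "{0..1} \<inter> tent r -` {..x} - {c, 1} = {0..r * x} \<union> {c<..1} - {c, 1}"
    using tent_le_iff[OF assms _ _ x, folded c_def] by auto
  then have "measure lborel ({0..1} \<inter> tent r -` {..x}) = measure lborel ({0..r * x} \<union> {c<..1})"
    by (intro measure_lborel_eq_mod_finite[of "{c, 1}"]) auto
  also have "\<dots> = x"
    using measure_lborel_Icc_Un_Ioc[OF \<open>0 \<le> r * x\<close> \<open>r * x \<le> c\<close> \<open>c \<le> 1\<close>]
    by (simp add: c_def algebra_simps)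
  finally show "measure lborel ({0..1} \<inter> tent r -` {..x}) = x" .
qed (use assms tent_range in auto)

lemma circle_shift_range: "0 \<le> c \<Longrightarrow> c \<le> 1 \<Longrightarrow> t \<in> {0..1} \<Longrightarrow> circle_shift c t \<in> {0..1}"
  unfolding circle_shift_def by auto

lemma distr_circle_shift:
  assumes "0 \<le> c" "c \<le> 1"
  shows "distr uniform_01 lborel (circle_shift c) = uniform_01"
proof (rule distr_uniform_01_eqI)
  fix x :: real assume x: "0 \<le> x" "x < 1"
  define S where "S = {0..1} \<inter> circle_shift c -` {..x}"
  have S_meas: "S \<in> sets lborel"
    unfolding S_def using measurable_sets[OF borel_measurable_circle_shift, of "{..x}" c] by simp
  show "measure lborel S = x"
  proof (cases "x + c \<le> 1")
    case True
    then have "S - {0} = {c..c + x} - {0}"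
      using assms x unfolding S_def circle_shift_def by (auto split: if_splits)
    then have "measure lborel S = measure lborel {c..c + x}"
      by (intro measure_lborel_eq_mod_finite[of "{0}"] S_meas) auto
    then show ?thesis using x by simp
  next
    case False
    then have "S - {c} = {0..x + c - 1} \<union> {c<..1} - {c}"
      using assms x unfolding S_def circle_shift_def by (auto split: if_splits)
    then have "measure lborel S = measure lborel ({0..x + c - 1} \<union> {c<..1})"
      by (intro measure_lborel_eq_mod_finite[of "{c}"] S_meas) auto
    also have "\<dots> = x"
      using False assms x by (subst measure_lborel_Icc_Un_Ioc) auto
    finally show ?thesis .
  qed
qed (use assms circle_shift_range in auto)

lemma distr_tent_circle_shift:
  assumes "0 \<le> r" "r \<le> 1" "0 \<le> c" "c \<le> 1"
  shows "distr uniform_01 lborel (\<lambda>t. tent r (circle_shift c t)) = uniform_01"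
proof -
  have "distr uniform_01 lborel (\<lambda>t. tent r (circle_shift c t))
      = distr (distr uniform_01 lborel (circle_shift c)) lborel (tent r)"
    by (subst distr_distr) (auto simp: comp_def)
  also have "\<dots> = uniform_01"
    using assms by (simp add: distr_circle_shift distr_tent)
  finally show ?thesis .
qed

lemma tent_triangle_sum:
  fixes A B C t :: real
  assumes A: "A \<ge> 0" and B: "B \<ge> 0" and C: "C \<ge> 0" and one: "A*B + B*C + C*A = 1"
    and t: "0 < t" "t < 1" "t \<noteq> C*A" "t \<noteq> C*A + A*B"
  shows "(A+B) * tent (A*B) (circle_shift (C*A) t) + (A+C) * tent (C*A) t
         + (B+C) * tent (B*C) (circle_shift (C*A + A*B) t) = A+B+C"
proof -
  have "A*B \<ge> 0" "B*C \<ge> 0" "C*A \<ge> 0" using A B C by simp_all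
  \<comment> \<open>Rewriting \<open>1\<close> to \<open>A B + B C + C A\<close> makes each closing identity a plain field identity.\<close>
  note unfold = tent_def circle_shift_def one[symmetric]
  consider "t < C*A" | "C*A < t" "t < C*A + A*B" | "C*A + A*B < t" using t by linarith
  then show ?thesis
  proof cases
    case 1
    then have "A > 0" "C > 0" using A C t by (auto simp: zero_less_mult_iff order_less_le)
    have V1: "tent (A*B) (circle_shift (C*A) t) = (C*A - t) / (C*(A+B))"
      using 1 t \<open>B*C \<ge> 0\<close> unfolding unfold by (auto simp: algebra_simps)
    have V2: "tent (C*A) t = t / (C*A)" using 1 unfolding tent_def by simp
    have V3: "tent (B*C) (circle_shift (C*A + A*B) t) = (A*(B+C) - t) / (A*(B+C))"
      using 1 t \<open>A*B \<ge> 0\<close> unfolding unfold by (auto simp: algebra_simps)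
    show ?thesis unfolding V1 V2 V3 using \<open>A > 0\<close> \<open>C > 0\<close> B
      by (simp add: divide_simps) (simp add: algebra_simps)
  next
    case 2
    then have "A > 0" "B > 0" using A B by (auto simp: zero_less_mult_iff order_less_le)
    have V1: "tent (A*B) (circle_shift (C*A) t) = (t - C*A) / (A*B)"
      using 2 unfolding tent_def circle_shift_def by auto
    have V2: "tent (C*A) t = (A*B + B*C + C*A - t) / (B*(A+C))"
      using 2 unfolding unfold by (auto simp: algebra_simps)
    have V3: "tent (B*C) (circle_shift (C*A + A*B) t) = (A*(B+C) - t) / (A*(B+C))"
      using 2 t \<open>A*B \<ge> 0\<close> unfolding unfold by (auto simp: algebra_simps)
    show ?thesis unfolding V1 V2 V3 using \<open>A > 0\<close> \<open>B > 0\<close> C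
      by (simp add: divide_simps) (simp add: algebra_simps)
  next
    case 3
    then have "B > 0" "C > 0" using B C t one by (auto simp: zero_less_mult_iff order_less_le algebra_simps)
    have V1: "tent (A*B) (circle_shift (C*A) t) = (A*B + B*C + 2*C*A - t) / (C*(A+B))"
      using 3 t \<open>A*B \<ge> 0\<close> \<open>B*C \<ge> 0\<close> unfolding unfold by (auto simp: algebra_simps)
    have V2: "tent (C*A) t = (A*B + B*C + C*A - t) / (B*(A+C))"
      using 3 \<open>A*B \<ge> 0\<close> unfolding unfold by (auto simp: algebra_simps)
    have V3: "tent (B*C) (circle_shift (C*A + A*B) t) = (t - C*A - A*B) / (B*C)"
      using 3 t unfolding unfold by (auto simp: algebra_simps)
    show ?thesis unfolding V1 V2 V3 using \<open>B > 0\<close> \<open>C > 0\<close> A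
      by (simp add: divide_simps) (simp add: algebra_simps)
  qed
qed

lemma AE_tent_triangle_sum:
  fixes A B C :: real
  assumes "A \<ge> 0" "B \<ge> 0" "C \<ge> 0" "A*B + B*C + C*A = 1"
  shows "AE t in uniform_01. (A+B) * tent (A*B) (circle_shift (C*A) t) + (A+C) * tent (C*A) t
           + (B+C) * tent (B*C) (circle_shift (C*A + A*B) t) = A+B+C"
proof (rule AE_uniform_measureI)
  have "AE t in lborel. t \<notin> {0, 1, C*A, C*A + A*B}"
    by (intro AE_discrete_difference) auto
  then show "AE t in lborel. t \<in> {0..1} \<longrightarrow> (A+B) * tent (A*B) (circle_shift (C*A) t)
      + (A+C) * tent (C*A) t + (B+C) * tent (B*C) (circle_shift (C*A + A*B) t) = A+B+C"
    by eventually_elim (auto intro: tent_triangle_sum[OF assms])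
qed simp

lemma triangle_weights_normalized:
  fixes w1 w2 w3 :: real
  assumes "w1 > 0" "w2 > 0" "w3 > 0"
    and "2 * w1 \<le> w1 + w2 + w3" "2 * w2 \<le> w1 + w2 + w3" "2 * w3 \<le> w1 + w2 + w3"
  obtains s A B C where "s > 0" "A \<ge> 0" "B \<ge> 0" "C \<ge> 0" "A*B + B*C + C*A = 1"
    "w1 = s * (A + B)" "w2 = s * (A + C)" "w3 = s * (B + C)"
proof -
  define a b c where "a = (w1 + w2 - w3) / 2" "b = (w1 + w3 - w2) / 2" "c = (w2 + w3 - w1) / 2"
  have abc: "a \<ge> 0" "b \<ge> 0" "c \<ge> 0" using assms by (simp_all add: a_b_c_def)
  define D where "D = a*b + b*c + c*a"
  have "D > 0"
  proof -
    have "a*b \<ge> 0" "b*c \<ge> 0" "c*a \<ge> 0" using abc by simp_all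
    moreover have "a*b > 0 \<or> b*c > 0 \<or> c*a > 0"
      using abc assms by (auto simp: a_b_c_def zero_less_mult_iff)
    ultimately show ?thesis unfolding D_def by linarith
  qed
  define s where "s = sqrt D"
  have "s > 0" "s * s = D" using \<open>D > 0\<close> by (simp_all add: s_def)
  show thesis
  proof (rule that[of s "a / s" "b / s" "c / s"])
    show "a / s * (b / s) + b / s * (c / s) + c / s * (a / s) = 1"
      unfolding times_divide_times_eq add_divide_distrib[symmetric] \<open>s * s = D\<close>
      using \<open>D > 0\<close> by (simp add: D_def)
  qed (use \<open>s > 0\<close> abc in \<open>auto simp: a_b_c_def field_simps\<close>)
qed

lemma wCM3_distr_uniform_01:
  assumes [measurable]: "f1 \<in> borel_measurable borel" "f2 \<in> borel_measurable borel"
      "f3 \<in> borel_measurable borel"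
    and marginals: "distr uniform_01 lborel f1 = uniform_01" "distr uniform_01 lborel f2 = uniform_01"
      "distr uniform_01 lborel f3 = uniform_01"
    and sum: "AE t in uniform_01. w1 * f1 t + w2 * f2 t + w3 * f3 t = (w1 + w2 + w3) / 2"
  shows "wCM3 (w1, w2, w3) (distr uniform_01 borel (\<lambda>t. (f1 t, f2 t, f3 t)))"
proof -
  define M where "M = distr uniform_01 borel (\<lambda>t. (f1 t, f2 t, f3 t))"
  have "prob_space uniform_01" by (rule prob_space_uniform_measure) auto
  then have M: "prob_space M"
    unfolding M_def by (rule prob_space.prob_space_distr) simp
  have "distr M lborel (\<lambda>(u1, u2, u3). u1) = distr uniform_01 lborel f1"
      "distr M lborel (\<lambda>(u1, u2, u3). u2) = distr uniform_01 lborel f2"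
      "distr M lborel (\<lambda>(u1, u2, u3). u3) = distr uniform_01 lborel f3"
    unfolding M_def case_prod_beta'
    by (subst distr_distr; auto simp: comp_def intro!: borel_measurable_continuous_onI continuous_intros)+
  then have "copula_law3 M"
    using M marginals unfolding copula_law3_def by (simp add: M_def)
  define E where "E = {(u1, u2, u3). w1 * u1 + w2 * u2 + w3 * u3 = (w1 + w2 + w3) / 2}"
  have "closed E"
    unfolding E_def case_prod_beta' by (intro closed_Collect_eq continuous_intros)
  then have [measurable]: "E \<in> sets borel" by (rule borel_closed)
  have "AE t in uniform_01. (f1 t, f2 t, f3 t) \<in> E"
    using sum by (simp add: E_def)
  then have "AE u in M. u \<in> E"
    unfolding M_def by (subst AE_distr_iff) simp_all
  then have "prob_space.prob M E = 1"
    using prob_space.prob_eq_1[OF M, of E] by (simp add: M_def)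
  then show ?thesis
    using \<open>copula_law3 M\<close> unfolding wCM3_def E_def M_def by simp
qed

theorem mainTheorem4:
  fixes w1 w2 w3 :: real
  assumes "w1 > 0" "w2 > 0" "w3 > 0"
    and "w1 + w2 + w3 \<ge> 2 * Max {w1, w2, w3}"
  shows "\<exists>M. wCM3 (w1, w2, w3) M"
proof -
  have "w1 \<le> Max {w1, w2, w3}" "w2 \<le> Max {w1, w2, w3}" "w3 \<le> Max {w1, w2, w3}" by simp_all
  then have "2 * w1 \<le> w1 + w2 + w3" "2 * w2 \<le> w1 + w2 + w3" "2 * w3 \<le> w1 + w2 + w3"
    using assms(4) by linarith+
  then obtain s A B C where s: "s > 0" and ABC: "A \<ge> 0" "B \<ge> 0" "C \<ge> 0" "A*B + B*C + C*A = 1"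
    and w: "w1 = s * (A + B)" "w2 = s * (A + C)" "w3 = s * (B + C)"
    using triangle_weights_normalized assms(1-3) by blast
  define f1 where "f1 t = tent (A*B) (circle_shift (C*A) t)" for t
  define f2 where "f2 = tent (C*A)"
  define f3 where "f3 t = tent (B*C) (circle_shift (C*A + A*B) t)" for t
  have "0 \<le> A*B" "0 \<le> B*C" "0 \<le> C*A" using ABC by simp_all
  then have "A*B \<le> 1" "B*C \<le> 1" "C*A + A*B \<le> 1" using ABC(4) by linarith+
  then have marginals: "distr uniform_01 lborel f1 = uniform_01" "distr uniform_01 lborel f2 = uniform_01"
      "distr uniform_01 lborel f3 = uniform_01"
    using \<open>0 \<le> A*B\<close> \<open>0 \<le> B*C\<close> \<open>0 \<le> C*A\<close> unfolding f1_def f2_def f3_def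
    by (intro distr_tent_circle_shift distr_tent; linarith)+
  have measurable: "f1 \<in> borel_measurable borel" "f2 \<in> borel_measurable borel"
      "f3 \<in> borel_measurable borel"
    unfolding f1_def f2_def f3_def by measurable
  have "AE t in uniform_01. w1 * f1 t + w2 * f2 t + w3 * f3 t = (w1 + w2 + w3) / 2"
    using AE_tent_triangle_sum[OF ABC]
  proof eventually_elim
    case (elim t)
    then have "s * ((A+B) * f1 t + (A+C) * f2 t + (B+C) * f3 t) = s * (A + B + C)"
      unfolding f1_def f2_def f3_def by simp
    then show ?case unfolding w by (simp add: algebra_simps)
  qed
  from wCM3_distr_uniform_01[OF measurable marginals this] show ?thesis by blast
qed

end
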